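(* Let $\mathcal{A} = (Q, \Sigma, M, \alpha, \eta)$ be an $\mathbb{R}$-IFA. Then $L(\mathcal{A})$ is a regular language, and there is a deterministic finite automaton $\mathcal{B}$ with at most $2^{|Q|}$ states such that $L(\mathcal{B}) = L(\mathcal{A})$.
   Context: An $\mathbb{R}$-weighted automaton $\mathcal{A} = (Q, \Sigma, M, \alpha, \eta)$ consists of a finite set of states $Q$, a finite alphabet $\Sigma$, a map $M : \Sigma \to \mathbb{R}^{Q \times Q}$, an initial row vector $\alpha \in \mathbb{R}^Q$ and a final column vector $\eta \in \mathbb{R}^Q$. $M$ is extended to $\Sigma^*$ by $M(a_1\cdots a_k) = M(a_1)\cdots M(a_k)$ (and $M(\varepsilon)$ the identity), and $L_\mathcal{A}(w) = \alpha M(w) \eta$ for $w \in \Sigma^*$. $\mathcal{A}$ is an $\mathbb{R}$-IFA (image-binary finite automaton) if $L_\mathcal{A}(w) \in \{0,1\}$ for all $w \in \Sigma^*$; it then defines the language $L(\mathcal{A}) = \{w \in \Sigma^* \mid L_\mathcal{A}(w) = 1\}$. *)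

theory Defs
  imports "HOL-Analysis.Analysis"
begin

text \<open>States form a finite type 'q (so Q = UNIV, |Q| = CARD('q)),
  letters form a finite type 'a (the alphabet Sigma = UNIV).
  M a is a Q x Q real matrix, alpha is the initial row vector, eta the final column vector.\<close>

fun word_mat :: "('a \<Rightarrow> real^'q^'q) \<Rightarrow> 'a list \<Rightarrow> real^'q^'q" where
  "word_mat M [] = mat 1"
| "word_mat M (a # w) = M a ** word_mat M w"

definition wa_weight :: "('a \<Rightarrow> real^'q^'q) \<Rightarrow> real^'q \<Rightarrow> real^'q \<Rightarrow> 'a list \<Rightarrow> real" where
  "wa_weight M \<alpha> \<eta> w = (\<alpha> v* word_mat M w) \<bullet> \<eta>"

definition is_IFA :: "('a \<Rightarrow> real^'q^'q) \<Rightarrow> real^'q \<Rightarrow> real^'q \<Rightarrow> bool" where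
  "is_IFA M \<alpha> \<eta> \<longleftrightarrow> (\<forall>w. wa_weight M \<alpha> \<eta> w \<in> {0, 1})"

definition IFA_lang :: "('a \<Rightarrow> real^'q^'q) \<Rightarrow> real^'q \<Rightarrow> real^'q \<Rightarrow> 'a list set" where
  "IFA_lang M \<alpha> \<eta> = {w. wa_weight M \<alpha> \<eta> w = 1}"

definition is_DFA :: "nat set \<Rightarrow> nat \<Rightarrow> (nat \<Rightarrow> 'a \<Rightarrow> nat) \<Rightarrow> nat set \<Rightarrow> bool" where
  "is_DFA S s0 \<delta> F \<longleftrightarrow> finite S \<and> s0 \<in> S \<and> (\<forall>s\<in>S. \<forall>a. \<delta> s a \<in> S) \<and> F \<subseteq> S"

definition DFA_lang :: "nat \<Rightarrow> (nat \<Rightarrow> 'a \<Rightarrow> nat) \<Rightarrow> nat set \<Rightarrow> 'a list set" where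
  "DFA_lang s0 \<delta> F = {w. foldl \<delta> s0 w \<in> F}"

definition regular_lang :: "'a list set \<Rightarrow> bool" where
  "regular_lang L \<longleftrightarrow> (\<exists>S s0 \<delta> F. is_DFA S s0 \<delta> F \<and> DFA_lang s0 \<delta> F = L)"

end

theory Submission
  imports Defs "HOL-Library.FuncSet"
begin

text \<open>Fix a basis \<open>B\<close> of the span of the vectors \<open>M(v) \<eta>\<close>, \<open>v \<in> \<Sigma>\<^sup>*\<close>.
  Two prefixes \<open>u\<close>, \<open>u'\<close> have the same future \<open>v \<mapsto> L\<^sub>\<A>(u v)\<close> exactly when the row vectors
  \<open>\<alpha> M(u)\<close> and \<open>\<alpha> M(u')\<close> have the same inner products with all elements of \<open>B\<close>. Each such
  inner product \<open>\<alpha> M(u) M(v) \<eta>\<close> is a weight of the automaton, hence lies in \<open>{0, 1}\<close>; so there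
  are at most \<open>2\<^bsup>|B|\<^esup> \<le> 2\<^bsup>|Q|\<^esup>\<close> Myhill-Nerode classes, and they are the states of the
  deterministic automaton.\<close>

lemma DFA_of_saturating_right_invariant_nat:
  fixes st :: "'a list \<Rightarrow> nat"
  assumes fin: "finite (range st)"
    and right_invariant: "\<And>u u' a. st u = st u' \<Longrightarrow> st (u @ [a]) = st (u' @ [a])"
    and saturating: "\<And>u u'. st u = st u' \<Longrightarrow> u \<in> L \<longleftrightarrow> u' \<in> L"
  shows "\<exists>\<delta>. is_DFA (range st) (st []) \<delta> (st ` L) \<and> DFA_lang (st []) \<delta> (st ` L) = L"
proof (intro exI conjI)
  define \<delta> where "\<delta> s a = st ((SOME u. st u = s) @ [a])" for s a
  have step: "\<delta> (st u) a = st (u @ [a])" for u a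
  proof -
    have "st (SOME u'. st u' = st u) = st u" by (rule someI) (rule refl)
    then show ?thesis unfolding \<delta>_def by (rule right_invariant)
  qed
  have run: "foldl \<delta> (st u) w = st (u @ w)" for u w
    by (induction w arbitrary: u) (simp_all add: step)
  show "is_DFA (range st) (st []) \<delta> (st ` L)"
    using fin unfolding is_DFA_def \<delta>_def by blast
  show "DFA_lang (st []) \<delta> (st ` L) = L"
  proof (rule set_eqI)
    fix w
    have "w \<in> DFA_lang (st []) \<delta> (st ` L) \<longleftrightarrow> st w \<in> st ` L"
      using run[of "[]" w] by (simp add: DFA_lang_def)
    also have "\<dots> \<longleftrightarrow> w \<in> L"
      using saturating by blast
    finally show "w \<in> DFA_lang (st []) \<delta> (st ` L) \<longleftrightarrow> w \<in> L" .
  qed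
qed

lemma DFA_of_saturating_right_invariant:
  fixes key :: "'a list \<Rightarrow> 'k"
  assumes fin: "finite (range key)"
    and right_invariant: "\<And>u u' a. key u = key u' \<Longrightarrow> key (u @ [a]) = key (u' @ [a])"
    and saturating: "\<And>u u'. key u = key u' \<Longrightarrow> u \<in> L \<longleftrightarrow> u' \<in> L"
  shows "\<exists>S s0 \<delta> F. is_DFA S s0 \<delta> F \<and> card S = card (range key) \<and> DFA_lang s0 \<delta> F = L"
proof -
  obtain h :: "'k \<Rightarrow> nat" where h: "inj_on h (range key)"
    using finite_imp_inj_to_nat_seg[OF fin] by blast
  define st where "st = h \<circ> key"
  have range_st: "range st = h ` range key"
    by (simp add: st_def image_comp)
  have st_eq: "st u = st u' \<longleftrightarrow> key u = key u'" for u u'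
    using h by (auto simp: st_def dest: inj_onD)
  have "finite (range st)"
    using fin by (simp add: range_st)
  then obtain \<delta> where "is_DFA (range st) (st []) \<delta> (st ` L)" "DFA_lang (st []) \<delta> (st ` L) = L"
    using DFA_of_saturating_right_invariant_nat[of st L] right_invariant saturating
    unfolding st_eq by blast
  moreover have "card (range st) = card (range key)"
    using h by (simp add: range_st card_image)
  ultimately show ?thesis
    by blast
qed

lemma word_mat_append: "word_mat M (u @ v) = word_mat M u ** word_mat M v"
  by (induction u) (auto simp: matrix_mul_assoc matrix_mul_lid)

lemma wa_weight_append:
  "wa_weight M \<alpha> \<eta> (u @ v) = (\<alpha> v* word_mat M u) \<bullet> (word_mat M v *v \<eta>)"
  by (simp add: wa_weight_def word_mat_append vector_matrix_mul_assoc[symmetric] dot_lmul_matrix)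

definition signature :: "('a \<Rightarrow> real^'q^'q) \<Rightarrow> real^'q \<Rightarrow> (real^'q) set \<Rightarrow> 'a list \<Rightarrow> real^'q \<Rightarrow> real"
  where "signature M \<alpha> B u = restrict (\<lambda>b. (\<alpha> v* word_mat M u) \<bullet> b) B"

lemma signature_eq_iff_same_future:
  assumes B_sub: "B \<subseteq> range (\<lambda>v. word_mat M v *v \<eta>)"
    and B_spans: "range (\<lambda>v. word_mat M v *v \<eta>) \<subseteq> span B"
  shows "signature M \<alpha> B u = signature M \<alpha> B u' \<longleftrightarrow>
         (\<forall>v. wa_weight M \<alpha> \<eta> (u @ v) = wa_weight M \<alpha> \<eta> (u' @ v))"
proof
  assume sig: "signature M \<alpha> B u = signature M \<alpha> B u'"
  have on_B: "(\<alpha> v* word_mat M u) \<bullet> b = (\<alpha> v* word_mat M u') \<bullet> b" if "b \<in> B" for b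
    using fun_cong[OF sig, of b] that by (simp add: signature_def)
  show "\<forall>v. wa_weight M \<alpha> \<eta> (u @ v) = wa_weight M \<alpha> \<eta> (u' @ v)"
  proof
    fix v
    have in_span: "word_mat M v *v \<eta> \<in> span B"
      using B_spans by blast
    have "(\<alpha> v* word_mat M u) \<bullet> (word_mat M v *v \<eta>) = (\<alpha> v* word_mat M u') \<bullet> (word_mat M v *v \<eta>)"
      by (rule linear_eq_on_span[of "\<lambda>x. (\<alpha> v* word_mat M u) \<bullet> x" "\<lambda>x. (\<alpha> v* word_mat M u') \<bullet> x"])
        (use in_span on_B in \<open>auto intro: bounded_linear.linear[OF bounded_linear_inner_right]\<close>)
    then show "wa_weight M \<alpha> \<eta> (u @ v) = wa_weight M \<alpha> \<eta> (u' @ v)"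
      by (simp add: wa_weight_append)
  qed
next
  assume future: "\<forall>v. wa_weight M \<alpha> \<eta> (u @ v) = wa_weight M \<alpha> \<eta> (u' @ v)"
  show "signature M \<alpha> B u = signature M \<alpha> B u'"
  proof
    fix b
    show "signature M \<alpha> B u b = signature M \<alpha> B u' b"
    proof (cases "b \<in> B")
      case True
      then obtain v where "b = word_mat M v *v \<eta>"
        using B_sub by blast
      then show ?thesis
        using future True by (simp add: signature_def wa_weight_append)
    qed (simp add: signature_def)
  qed
qed

lemma signature_in_PiE:
  assumes "is_IFA M \<alpha> \<eta>" and "B \<subseteq> range (\<lambda>v. word_mat M v *v \<eta>)"
  shows "signature M \<alpha> B u \<in> (\<Pi>\<^sub>E b\<in>B. {0, 1})"
proof -
  have "(\<alpha> v* word_mat M u) \<bullet> b \<in> {0, 1}" if "b \<in> B" for b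
  proof -
    obtain v where "b = word_mat M v *v \<eta>"
      using assms(2) \<open>b \<in> B\<close> by blast
    then show ?thesis
      using assms(1) by (simp add: is_IFA_def flip: wa_weight_append)
  qed
  then show ?thesis
    by (simp add: signature_def)
qed

lemma card_range_signature_le:
  assumes "is_IFA M \<alpha> \<eta>" and "B \<subseteq> range (\<lambda>v. word_mat M v *v \<eta>)" and "finite B"
  shows "finite (range (signature M \<alpha> B))" and "card (range (signature M \<alpha> B)) \<le> 2 ^ card B"
proof -
  have sub: "range (signature M \<alpha> B) \<subseteq> (\<Pi>\<^sub>E b\<in>B. {0::real, 1})"
    using signature_in_PiE[OF assms(1,2)] by blast
  have fin: "finite (\<Pi>\<^sub>E b\<in>B. {0::real, 1})"
    using assms(3) by (simp add: finite_PiE)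
  show "finite (range (signature M \<alpha> B))"
    using sub fin by (rule finite_subset)
  have "card (range (signature M \<alpha> B)) \<le> card (\<Pi>\<^sub>E b\<in>B. {0::real, 1})"
    using sub fin by (rule card_mono[rotated])
  also have "\<dots> = 2 ^ card B"
    using assms(3) by (simp add: card_PiE numeral_2_eq_2)
  finally show "card (range (signature M \<alpha> B)) \<le> 2 ^ card B" .
qed

lemma DFA_of_IFA_card_le:
  assumes IFA: "is_IFA M \<alpha> \<eta>"
    and B_sub: "B \<subseteq> range (\<lambda>v. word_mat M v *v \<eta>)"
    and B_spans: "range (\<lambda>v. word_mat M v *v \<eta>) \<subseteq> span B"
    and "finite B"
  shows "\<exists>S s0 \<delta> F. is_DFA S s0 \<delta> F \<and> card S \<le> 2 ^ card B \<and> DFA_lang s0 \<delta> F = IFA_lang M \<alpha> \<eta>"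
proof -
  note future = signature_eq_iff_same_future[OF B_sub B_spans]
  have "\<exists>S s0 \<delta> F. is_DFA S s0 \<delta> F \<and> card S = card (range (signature M \<alpha> B)) \<and>
          DFA_lang s0 \<delta> F = IFA_lang M \<alpha> \<eta>"
  proof (rule DFA_of_saturating_right_invariant)
    show "finite (range (signature M \<alpha> B))"
      using card_range_signature_le(1)[OF IFA B_sub \<open>finite B\<close>] .
    show "signature M \<alpha> B (u @ [a]) = signature M \<alpha> B (u' @ [a])"
      if "signature M \<alpha> B u = signature M \<alpha> B u'" for u u' a
      using that unfolding future by (metis append_assoc)
    show "u \<in> IFA_lang M \<alpha> \<eta> \<longleftrightarrow> u' \<in> IFA_lang M \<alpha> \<eta>"
      if "signature M \<alpha> B u = signature M \<alpha> B u'" for u u'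
      using that unfolding future IFA_lang_def by (metis append_Nil2 mem_Collect_eq)
  qed
  then show ?thesis
    using card_range_signature_le(2)[OF IFA B_sub \<open>finite B\<close>] by (metis order.refl)
qed

theorem theorem1:
  fixes M :: "'a::finite \<Rightarrow> real^'q::finite^'q"
    and \<alpha> \<eta> :: "real^'q"
  assumes "is_IFA M \<alpha> \<eta>"
  shows "regular_lang (IFA_lang M \<alpha> \<eta>) \<and>
         (\<exists>S s0 \<delta> F. is_DFA S s0 \<delta> F \<and> card S \<le> 2 ^ CARD('q) \<and>
                     DFA_lang s0 \<delta> F = IFA_lang M \<alpha> \<eta>)"
proof -
  obtain B where B_sub: "B \<subseteq> range (\<lambda>v. word_mat M v *v \<eta>)" and "independent B"
    and B_spans: "range (\<lambda>v. word_mat M v *v \<eta>) \<subseteq> span B"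
    using maximal_independent_subset by blast
  then have "finite B" and "card B \<le> CARD('q)"
    using independent_bound[OF \<open>independent B\<close>] by auto
  obtain S s0 \<delta> F where DFA: "is_DFA S s0 \<delta> F" "DFA_lang s0 \<delta> F = IFA_lang M \<alpha> \<eta>"
    and card_S: "card S \<le> 2 ^ card B"
    using DFA_of_IFA_card_le[OF assms B_sub B_spans \<open>finite B\<close>] by blast
  note card_S
  also have "2 ^ card B \<le> (2::nat) ^ CARD('q)"
    using \<open>card B \<le> CARD('q)\<close> by (simp add: power_increasing)
  finally show ?thesis
    using DFA unfolding regular_lang_def by blast
qed

end
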